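(* Let $n\in\mathbb{N}=\{0,1,2,\dots\}$, $a,b\in\mathbb{C}$ with $b\notin\mathbb{Z}^-=\{-1,-2,-3,\dots\}$. Then \[ \frac{1}{2n+b+2}\sum_{j=0}^{n}\sum_{i=0}^{j}\frac{\binom{2n+a+2}{i}}{\binom{2n+b+1}{j}} =\sum_{k=0}^{n}\frac{1}{(k+1)\binom{2k+b+2}{k+1}}\left(\binom{2k+a}{k}+\frac{b\sum_{j=0}^{k-1}\binom{2k+a}{j}}{k+b+1}\right). \]
   Context: For $x\in\mathbb{C}$ and $i\in\mathbb{N}$, the binomial coefficient is $\binom{x}{i}=\frac{x(x-1)\cdots(x-i+1)}{i!}$ (with $\binom{x}{0}=1$); in particular for $m,i\in\mathbb{N}$, $\binom{-m}{i}=(-1)^i\binom{m+i-1}{i}$. Empty sums are $0$. *)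

theory Defs
  imports Complex_Main
begin

end

theory Submission
  imports Defs
begin

text \<open>Let \<open>T\<^sub>m(x, y)\<close> be \<open>binomial_ratio_sum m x y\<close> and \<open>f\<^sub>m(x, y)\<close> be
  \<open>telescoping_term m x y\<close>; the left-hand side is \<open>T\<^sub>n\<^sub>+\<^sub>1(2n + a + 2, 2n + b + 1)\<close> and the
  right-hand side is \<open>\<Sum>k\<le>n. f\<^sub>k(2k + a + 2, 2k + b + 1)\<close>. Everything rests on the shift identity
  \<open>T\<^sub>m\<^sub>+\<^sub>1(x, y) - T\<^sub>m(x - 2, y - 2) = f\<^sub>m(x, y)\<close>, which telescopes to the theorem. It is proved
  by induction on \<open>m\<close>: Pascal's rule, applied twice, expresses the partial row sums of \<open>x\<close>
  through those of \<open>x - 2\<close>, and all binomials with upper argument \<open>y\<close> or \<open>y + 1\<close> are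
  rational multiples of \<open>(y - 2) choose m\<close>, so the inductive step is a polynomial identity.
  The hypothesis on \<open>b\<close> is exactly what keeps all denominators \<open>y + 1 - i\<close> nonzero.\<close>

definition binomial_ratio_sum :: "nat \<Rightarrow> 'a::field_char_0 \<Rightarrow> 'a \<Rightarrow> 'a" where
  "binomial_ratio_sum m x y = (\<Sum>j<m. \<Sum>i\<le>j. (x gchoose i) / (y gchoose j)) / (y + 1)"

definition telescoping_term :: "nat \<Rightarrow> 'a::field_char_0 \<Rightarrow> 'a \<Rightarrow> 'a" where
  "telescoping_term m x y = 1 / ((of_nat m + 1) * ((y + 1) gchoose (m + 1))) *
     (((x - 2) gchoose m) + (y - 2 * of_nat m - 1) * (\<Sum>j<m. (x - 2) gchoose j) / (y - of_nat m))"

lemma binomial_ratio_sum_0 [simp]: "binomial_ratio_sum 0 x y = 0"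
  by (simp add: binomial_ratio_sum_def)

lemma binomial_ratio_sum_Suc:
  "binomial_ratio_sum (Suc m) x y =
     binomial_ratio_sum m x y + (\<Sum>i\<le>m. x gchoose i) / (y gchoose m) / (y + 1)"
  by (simp add: binomial_ratio_sum_def sum_divide_distrib add_divide_distrib)

lemma sum_atMost_gbinomial_plus_one:
  "(\<Sum>i\<le>n. (w + 1) gchoose i) = (\<Sum>i\<le>n. w gchoose i) + (\<Sum>i<n. w gchoose i)"
proof (induction n)
  case (Suc n)
  then show ?case
    using gbinomial_Suc_Suc[of w n] by (simp flip: lessThan_Suc_atMost)
qed simp

lemma gbinomial_absorb_comp':
  fixes a :: "'a::field_char_0"
  assumes "a \<noteq> of_nat k"
  shows "a gchoose k = a / (a - of_nat k) * ((a - 1) gchoose k)"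
  using gbinomial_absorb_comp[of a k] assms by (simp add: field_simps)

lemma gbinomial_Suc_absorption:
  fixes a :: "'a::field_char_0"
  shows "a gchoose Suc k = a / (of_nat k + 1) * ((a - 1) gchoose k)"
  using gbinomial_absorption'[of "Suc k" a] by simp

lemma gbinomial_Suc_lower:
  fixes a :: "'a::field_char_0"
  shows "a gchoose Suc k = (a - of_nat k) / (of_nat k + 1) * (a gchoose k)"
proof -
  have "of_nat k + 1 \<noteq> (0::'a)"
    using of_nat_neq_0[of k] by (simp add: add.commute)
  then show ?thesis
    using gbinomial_mult_1[of a k] by (simp add: field_simps)
qed

lemma gbinomial_nonzero:
  fixes a :: "'a::field_char_0"
  assumes "\<And>i. i < k \<Longrightarrow> a \<noteq> of_nat i"
  shows "a gchoose k \<noteq> 0"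
  using assms by (auto simp: gbinomial_prod_rev)

lemma sum_atMost_gbinomial_plus_two:
  "(\<Sum>i\<le>Suc m. (w + 2) gchoose i)
     = 4 * (\<Sum>i<m. w gchoose i) + 3 * (w gchoose m) + (w gchoose Suc m)"
proof -
  have "(\<Sum>i\<le>Suc m. (w + 2) gchoose i)
      = (\<Sum>i\<le>Suc m. (w + 1) gchoose i) + (\<Sum>i\<le>m. (w + 1) gchoose i)"
    using sum_atMost_gbinomial_plus_one[of "w + 1" "Suc m"] by (simp add: lessThan_Suc_atMost add.assoc)
  also have "\<dots> = (\<Sum>i\<le>Suc m. w gchoose i) + 2 * (\<Sum>i\<le>m. w gchoose i) + (\<Sum>i<m. w gchoose i)"
    using sum_atMost_gbinomial_plus_one[of w "Suc m"] sum_atMost_gbinomial_plus_one[of w m]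
    by (simp add: lessThan_Suc_atMost)
  also have "\<dots> = 4 * (\<Sum>i<m. w gchoose i) + 3 * (w gchoose m) + (w gchoose Suc m)"
    by (simp flip: lessThan_Suc_atMost)
  finally show ?thesis .
qed

lemma gbinomial_upper_shifts:
  fixes y :: "'a::field_char_0"
  assumes "y - 1 \<noteq> of_nat m" "y \<noteq> of_nat m"
  defines "k \<equiv> of_nat m :: 'a" and "H \<equiv> (y - 2) gchoose m"
  shows "y gchoose Suc m = y / (k + 1) * ((y - 1) / (y - 1 - k) * H)"
    and "(y + 1) gchoose Suc m = (y + 1) / (k + 1) * (y / (y - k) * ((y - 1) / (y - 1 - k) * H))"
    and "(y + 1) gchoose Suc (Suc m) = (y + 1) / (k + 2) * (y / (k + 1) * ((y - 1) / (y - 1 - k) * H))"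
proof -
  have minus_one: "y - 1 gchoose m = (y - 1) / (y - 1 - k) * H"
    using gbinomial_absorb_comp'[of "y - 1" m] assms(1) by (simp add: H_def k_def algebra_simps)
  show upper: "y gchoose Suc m = y / (k + 1) * ((y - 1) / (y - 1 - k) * H)"
    by (simp add: gbinomial_Suc_absorption minus_one k_def)
  show "(y + 1) gchoose Suc m = (y + 1) / (k + 1) * (y / (y - k) * ((y - 1) / (y - 1 - k) * H))"
    using gbinomial_Suc_absorption[of "y + 1" m] gbinomial_absorb_comp'[OF assms(2)]
    by (simp add: minus_one k_def)
  show "(y + 1) gchoose Suc (Suc m) = (y + 1) / (k + 2) * (y / (k + 1) * ((y - 1) / (y - 1 - k) * H))"
    using gbinomial_Suc_absorption[of "y + 1" "Suc m"] by (simp add: upper k_def add.assoc)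
qed

text \<open>The inductive step of the shift identity, with \<open>P\<close>, \<open>c\<close>, \<open>H\<close> standing for
  \<open>\<Sum>j<m. (x - 2) choose j\<close>, \<open>(x - 2) choose m\<close> and \<open>(y - 2) choose m\<close>.\<close>

lemma shift_identity_step:
  fixes x y m P c H :: "'a::field"
  assumes "y - 1 - m \<noteq> 0" "y - m \<noteq> 0" "m + 1 \<noteq> 0" "m + 2 \<noteq> 0"
    and "y \<noteq> 0" "y - 1 \<noteq> 0" "y + 1 \<noteq> 0" "H \<noteq> 0"
  shows "(4 * P + 3 * c + (x - 2 - m) / (m + 1) * c) / (y / (m + 1) * ((y - 1) / (y - 1 - m) * H)) / (y + 1)
           - (P + c) / H / (y - 1)
       = 1 / ((m + 2) * ((y + 1) / (m + 2) * (y / (m + 1) * ((y - 1) / (y - 1 - m) * H))))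
           * ((x - 2 - m) / (m + 1) * c + (y - 2 * m - 3) * (P + c) / (y - 1 - m))
         - 1 / ((m + 1) * ((y + 1) / (m + 1) * (y / (y - m) * ((y - 1) / (y - 1 - m) * H))))
           * (c + (y - 2 * m - 1) * P / (y - m))"
  using assms by (simp add: divide_simps) (simp add: algebra_simps)

lemma binomial_ratio_sum_shift:
  fixes x y :: "'a::field_char_0"
  assumes "\<And>i. i \<le> 2 * m + 1 \<Longrightarrow> y + 1 \<noteq> of_nat i"
  shows "binomial_ratio_sum (Suc m) x y - binomial_ratio_sum m (x - 2) (y - 2) = telescoping_term m x y"
  using assms
proof (induction m)
  case 0
  then show ?case by (simp add: binomial_ratio_sum_def telescoping_term_def)
next
  case (Suc m)
  define k :: 'a where "k = of_nat m"
  define P where "P = (\<Sum>j<m. (x - 2) gchoose j)"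
  define c where "c = (x - 2) gchoose m"
  define H where "H = (y - 2) gchoose m"
  have y_ne: "y + 1 \<noteq> of_nat i" if "i \<le> m + 3" for i
    using Suc.prems that by simp
  have nonzero: "y - 1 - k \<noteq> 0" "y - k \<noteq> 0" "k + 1 \<noteq> 0" "k + 2 \<noteq> 0"
    "y \<noteq> 0" "y - 1 \<noteq> 0" "y + 1 \<noteq> 0"
    using y_ne[of "m + 2"] y_ne[of "m + 1"] y_ne[of 1] y_ne[of 2] y_ne[of 0]
      of_nat_neq_0[of m, where 'a='a] of_nat_neq_0[of "Suc m", where 'a='a]
    by (auto simp: k_def algebra_simps)
  have "H \<noteq> 0"
    unfolding H_def using y_ne[of "_ + 3"] by (intro gbinomial_nonzero) (auto simp: algebra_simps)
  have "y - 1 \<noteq> of_nat m" "y \<noteq> of_nat m"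
    using nonzero by (simp_all add: k_def)
  note upper = gbinomial_upper_shifts[OF this, folded k_def H_def]
  have c': "(x - 2) gchoose Suc m = (x - 2 - k) / (k + 1) * c"
    by (simp add: gbinomial_Suc_lower c_def k_def)
  have row_sum: "(\<Sum>i\<le>Suc m. x gchoose i) = 4 * P + 3 * c + (x - 2 - k) / (k + 1) * c"
    using sum_atMost_gbinomial_plus_two[of "x - 2" m] by (simp add: P_def c_def c')
  have "binomial_ratio_sum (Suc (Suc m)) x y - binomial_ratio_sum (Suc m) (x - 2) (y - 2)
      = (binomial_ratio_sum (Suc m) x y - binomial_ratio_sum m (x - 2) (y - 2))
        + ((\<Sum>i\<le>Suc m. x gchoose i) / (y gchoose Suc m) / (y + 1) - (P + c) / H / (y - 1))"
    by (simp add: binomial_ratio_sum_Suc P_def c_def H_def lessThan_Suc_atMost[symmetric] algebra_simps)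
  also have "\<dots> = telescoping_term m x y
        + ((\<Sum>i\<le>Suc m. x gchoose i) / (y gchoose Suc m) / (y + 1) - (P + c) / H / (y - 1))"
    using Suc by simp
  also have "\<dots> = telescoping_term (Suc m) x y"
  proof -
    have "telescoping_term m x y = 1 / ((k + 1) * ((y + 1) / (k + 1) * (y / (y - k) * ((y - 1) / (y - 1 - k) * H))))
           * (c + (y - 2 * k - 1) * P / (y - k))"
      by (simp add: telescoping_term_def upper(2) P_def c_def k_def)
    moreover have "telescoping_term (Suc m) x y
        = 1 / ((k + 2) * ((y + 1) / (k + 2) * (y / (k + 1) * ((y - 1) / (y - 1 - k) * H))))
           * ((x - 2 - k) / (k + 1) * c + (y - 2 * k - 3) * (P + c) / (y - 1 - k))"
    proof -
      have "of_nat (Suc m) + 1 = k + 2" "y - 2 * of_nat (Suc m) - 1 = y - 2 * k - 3"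
        "y - of_nat (Suc m) = y - 1 - k" "(\<Sum>j<Suc m. (x - 2) gchoose j) = P + c"
        by (simp_all add: k_def P_def c_def algebra_simps)
      then show ?thesis
        unfolding telescoping_term_def by (simp only: upper(3) c' Suc_eq_plus1[symmetric])
    qed
    ultimately show ?thesis
      using shift_identity_step[OF nonzero \<open>H \<noteq> 0\<close>, of P c x] unfolding row_sum upper(1)
      by (metis add.commute diff_add_cancel)
  qed
  finally show ?case .
qed

lemma add_of_nat_neq_of_nat_less:
  fixes b :: "'a::ring_char_0"
  assumes "\<And>k. b \<noteq> - of_nat (Suc k)" and "i < K"
  shows "b + of_nat K \<noteq> of_nat i"
proof
  obtain s where "K = Suc (i + s)"
    using less_imp_Suc_add[OF \<open>i < K\<close>] by blast
  moreover assume "b + of_nat K = of_nat i"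
  ultimately have "b = - of_nat (Suc s)"
    by (simp add: algebra_simps eq_neg_iff_add_eq_0)
  with assms(1) show False by blast
qed

lemma binomial_ratio_sum_telescoped:
  fixes a b :: "'a::field_char_0"
  assumes b: "\<And>k. b \<noteq> - of_nat (Suc k)"
  shows "binomial_ratio_sum (Suc n) (2 * of_nat n + a + 2) (2 * of_nat n + b + 1)
       = (\<Sum>k\<le>n. telescoping_term k (2 * of_nat k + a + 2) (2 * of_nat k + b + 1))"
proof (induction n)
  case 0
  have "b + of_nat 2 \<noteq> of_nat i" if "i \<le> 1" for i
    using add_of_nat_neq_of_nat_less[OF b, of i 2] that by simp
  then show ?case
    using binomial_ratio_sum_shift[of 0 "b + 1" "a + 2"] by (simp add: add.assoc)
next
  case (Suc n)
  let ?x = "2 * of_nat (Suc n) + a + 2" and ?y = "2 * of_nat (Suc n) + b + 1"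
  have "?y + 1 \<noteq> of_nat i" if "i \<le> 2 * Suc n + 1" for i
    using add_of_nat_neq_of_nat_less[OF b, of i "2 * Suc n + 2"] that by (simp add: algebra_simps)
  then have "binomial_ratio_sum (Suc (Suc n)) ?x ?y - binomial_ratio_sum (Suc n) (?x - 2) (?y - 2)
      = telescoping_term (Suc n) ?x ?y"
    by (rule binomial_ratio_sum_shift)
  moreover have "?x - 2 = 2 * of_nat n + a + 2" "?y - 2 = 2 * of_nat n + b + 1"
    by (simp_all add: algebra_simps)
  ultimately show ?case
    using Suc by (simp add: algebra_simps)
qed

theorem theorem1:
  fixes n :: nat and a b :: complex
  assumes "\<forall>m::nat. b \<noteq> - of_nat (Suc m)"
  shows "(1 / (2 * of_nat n + b + 2)) *
           (\<Sum>j=0..n. \<Sum>i=0..j. ((2 * of_nat n + a + 2) gchoose i) / ((2 * of_nat n + b + 1) gchoose j))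
       = (\<Sum>k=0..n. (1 / ((of_nat k + 1) * ((2 * of_nat k + b + 2) gchoose (k + 1)))) *
           (((2 * of_nat k + a) gchoose k)
            + b * (\<Sum>j<k. (2 * of_nat k + a) gchoose j) / (of_nat k + b + 1)))"
proof -
  have lhs: "(1 / (2 * of_nat n + b + 2)) *
           (\<Sum>j=0..n. \<Sum>i=0..j. ((2 * of_nat n + a + 2) gchoose i) / ((2 * of_nat n + b + 1) gchoose j))
      = binomial_ratio_sum (Suc n) (2 * of_nat n + a + 2) (2 * of_nat n + b + 1)"
    by (simp add: binomial_ratio_sum_def atLeast0AtMost lessThan_Suc_atMost add.assoc)
  have summand: "telescoping_term k (2 * of_nat k + a + 2) (2 * of_nat k + b + 1)
      = (1 / ((of_nat k + 1) * ((2 * of_nat k + b + 2) gchoose (k + 1)))) *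
           (((2 * of_nat k + a) gchoose k)
            + b * (\<Sum>j<k. (2 * of_nat k + a) gchoose j) / (of_nat k + b + 1))" for k
  proof -
    have "2 * of_nat k + a + 2 - 2 = 2 * of_nat k + a" "2 * of_nat k + b + 1 + 1 = 2 * of_nat k + b + 2"
      "2 * of_nat k + b + 1 - 2 * of_nat k - 1 = b" "2 * of_nat k + b + 1 - of_nat k = of_nat k + b + 1"
      by simp_all
    then show ?thesis
      unfolding telescoping_term_def by (simp only:)
  qed
  show ?thesis
    using assms unfolding lhs unfolding atLeast0AtMost summand[symmetric]
    by (intro binomial_ratio_sum_telescoped) blast
qed

end
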